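(* Let $K\ge 2$, let $\mathcal{D}$ be a probability distribution on $\mathcal{X}\times\mathcal{Y}$ with $\mathcal{Y}=\{1,\dots,K\}$, and let $\rho$ be a probability distribution over classifiers $h:\mathcal{X}\to\mathcal{Y}$. Let $W_\rho(X,Y)=\mathbb{E}_{h\sim\rho}[\mathbb{1}(h(X)\neq Y)]$ for $(X,Y)\sim\mathcal{D}$. Suppose $\rho$ is competent, i.e. for every $0\le t\le 1/2$, $$\mathbb{P}_{\mathcal{D}}\big(W_\rho\in[t,1/2)\big)\;\ge\;\mathbb{P}_{\mathcal{D}}\big(W_\rho\in[1/2,1-t]\big).$$ Suppose $\mathbb{E}_{h\sim\rho}[L(h)]\neq 0$. Then the ensemble improvement rate satisfies $\mathrm{EIR}\ge 0$, i.e. $L(h_{\mathrm{MV}})\le \mathbb{E}_{h\sim\rho}[L(h)]$.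
   Context: The error rate of a classifier is $L(h)=\mathbb{E}_{(X,Y)\sim\mathcal{D}}[\mathbb{1}(h(X)\neq Y)]$. The majority vote classifier is $h_{\mathrm{MV}}(x)=\arg\max_j \mathbb{E}_{h\sim\rho}[\mathbb{1}(h(x)=j)]$ (ties broken arbitrarily). The ensemble improvement rate is $\mathrm{EIR}=\big(\mathbb{E}_{h\sim\rho}[L(h)]-L(h_{\mathrm{MV}})\big)/\mathbb{E}_{h\sim\rho}[L(h)]$, defined when $\mathbb{E}_{h\sim\rho}[L(h)]\neq 0$. *)

theory Defs
  imports "HOL-Probability.Probability"
begin

definition err :: "('x \<times> nat) measure \<Rightarrow> ('x \<Rightarrow> nat) \<Rightarrow> real" where
  "err D h = measure D {z \<in> space D. h (fst z) \<noteq> snd z}"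

definition avg_err :: "('x \<Rightarrow> nat) measure \<Rightarrow> ('x \<times> nat) measure \<Rightarrow> real" where
  "avg_err \<rho> D = (\<integral>h. err D h \<partial>\<rho>)"

definition W :: "('x \<Rightarrow> nat) measure \<Rightarrow> 'x \<times> nat \<Rightarrow> real" where
  "W \<rho> z = (\<integral>h. indicator {h. h (fst z) \<noteq> snd z} h \<partial>\<rho>)"

definition vote :: "('x \<Rightarrow> nat) measure \<Rightarrow> 'x \<Rightarrow> nat \<Rightarrow> real" where
  "vote \<rho> x j = (\<integral>h. indicator {h. h x = j} h \<partial>\<rho>)"

definition is_majority_vote ::
  "nat \<Rightarrow> 'x measure \<Rightarrow> ('x \<Rightarrow> nat) measure \<Rightarrow> ('x \<Rightarrow> nat) \<Rightarrow> bool" where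
  "is_majority_vote K X \<rho> hMV \<longleftrightarrow>
     (\<forall>x\<in>space X. hMV x \<in> {1..K} \<and> (\<forall>j\<in>{1..K}. vote \<rho> x j \<le> vote \<rho> x (hMV x)))"

definition EIR :: "('x \<Rightarrow> nat) measure \<Rightarrow> ('x \<times> nat) measure \<Rightarrow> ('x \<Rightarrow> nat) \<Rightarrow> real" where
  "EIR \<rho> D hMV = (avg_err \<rho> D - err D hMV) / avg_err \<rho> D"

definition competent :: "('x \<Rightarrow> nat) measure \<Rightarrow> ('x \<times> nat) measure \<Rightarrow> bool" where
  "competent \<rho> D \<longleftrightarrow>
     (\<forall>t::real. 0 \<le> t \<and> t \<le> 1/2 \<longrightarrow>
        measure D {z \<in> space D. W \<rho> z \<in> {t..<1/2}}
          \<ge> measure D {z \<in> space D. W \<rho> z \<in> {1/2..1-t}})"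

end

theory Submission
  imports Defs
begin

(* If the majority vote errs at (x, y), then y received at most as many votes as the winning
   label, and two distinct labels share at most the whole vote, so W(x, y) >= 1/2; hence
   L(h_MV) <= P(W >= 1/2).  Split 1{W >= 1/2} = (1 - W) 1{W >= 1/2} + W 1{W >= 1/2}.  By Tonelli,
   E[(1 - W) 1{W >= 1/2}] and E[W 1{W < 1/2}] are the integrals over t in [0, 1/2] of
   P(W in [1/2, 1 - t]) and P(W in [t, 1/2)), so competence bounds the first by the second and
   P(W >= 1/2) <= E[W], which is the average error E_rho[L(h)] by Fubini. *)

lemma pred_neq_count_space:
  fixes f g :: "'a \<Rightarrow> 'b::countable"
  assumes [measurable]: "f \<in> measurable M (count_space UNIV)" "g \<in> measurable M (count_space UNIV)"
  shows "Measurable.pred M (\<lambda>x. f x \<noteq> g x)"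
  by measurable

lemma nn_integral_lborel_emeasure_section:
  fixes f :: "'a \<Rightarrow> real"
  assumes "sigma_finite_measure M"
    and [measurable]: "Measurable.pred M P" "f \<in> borel_measurable M"
  shows "(\<integral>\<^sup>+t. emeasure M {z \<in> space M. P z \<and> 0 \<le> t \<and> t \<le> f z} \<partial>lborel)
       = (\<integral>\<^sup>+z. ennreal (if P z then f z else 0) \<partial>M)"
proof -
  interpret pair_sigma_finite M lborel
    using assms(1) by (intro pair_sigma_finite.intro) (auto intro: lborel.sigma_finite_measure_axioms)
  let ?S = "\<lambda>z t. indicator {t. P z \<and> 0 \<le> t \<and> t \<le> f z} t :: ennreal"
  have "(\<integral>\<^sup>+t. emeasure M {z \<in> space M. P z \<and> 0 \<le> t \<and> t \<le> f z} \<partial>lborel)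
      = (\<integral>\<^sup>+t. \<integral>\<^sup>+z. ?S z t \<partial>M \<partial>lborel)"
  proof (intro nn_integral_cong)
    fix t
    have "emeasure M {z \<in> space M. P z \<and> 0 \<le> t \<and> t \<le> f z}
        = (\<integral>\<^sup>+z. indicator {z \<in> space M. P z \<and> 0 \<le> t \<and> t \<le> f z} z \<partial>M)"
      by (rule nn_integral_indicator[symmetric]) measurable
    also have "\<dots> = (\<integral>\<^sup>+z. ?S z t \<partial>M)"
      by (intro nn_integral_cong) (simp split: split_indicator)
    finally show "emeasure M {z \<in> space M. P z \<and> 0 \<le> t \<and> t \<le> f z} = (\<integral>\<^sup>+z. ?S z t \<partial>M)" .
  qed
  also have "\<dots> = (\<integral>\<^sup>+z. \<integral>\<^sup>+t. ?S z t \<partial>lborel \<partial>M)"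
    by (rule Fubini') measurable
  also have "\<dots> = (\<integral>\<^sup>+z. ennreal (if P z then f z else 0) \<partial>M)"
  proof (intro nn_integral_cong)
    fix z
    have "?S z = indicator (if P z then {0..f z} else {})"
      by (auto simp: fun_eq_iff split: split_indicator)
    then show "(\<integral>\<^sup>+t. ?S z t \<partial>lborel) = ennreal (if P z then f z else 0)"
      by (cases "0 \<le> f z") (auto simp: ennreal_neg)
  qed
  finally show ?thesis .
qed

lemma measure_ge_half_le_integral:
  fixes f :: "'a \<Rightarrow> real"
  assumes "prob_space M"
    and [measurable]: "f \<in> borel_measurable M"
    and f_range: "\<And>z. z \<in> space M \<Longrightarrow> 0 \<le> f z \<and> f z \<le> 1"
    and balanced: "\<And>t. 0 \<le> t \<Longrightarrow> t \<le> 1/2 \<Longrightarrow>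
      measure M {z \<in> space M. f z \<in> {1/2..1-t}} \<le> measure M {z \<in> space M. f z \<in> {t..<1/2}}"
  shows "measure M {z \<in> space M. 1/2 \<le> f z} \<le> (\<integral>z. f z \<partial>M)"
proof -
  interpret prob_space M by fact
  have sections: "emeasure M {z \<in> space M. 1/2 \<le> f z \<and> 0 \<le> t \<and> t \<le> 1 - f z}
      \<le> emeasure M {z \<in> space M. f z < 1/2 \<and> 0 \<le> t \<and> t \<le> f z}" for t
  proof (cases "0 \<le> t \<and> t \<le> 1/2")
    case True
    then have "{z \<in> space M. 1/2 \<le> f z \<and> 0 \<le> t \<and> t \<le> 1 - f z} = {z \<in> space M. f z \<in> {1/2..1-t}}"
      and "{z \<in> space M. f z < 1/2 \<and> 0 \<le> t \<and> t \<le> f z} = {z \<in> space M. f z \<in> {t..<1/2}}"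
      by auto
    with True balanced[of t] show ?thesis
      by (simp add: emeasure_eq_measure)
  next
    case False
    then have "{z \<in> space M. 1/2 \<le> f z \<and> 0 \<le> t \<and> t \<le> 1 - f z} = {}"
      by auto
    then show ?thesis
      by (metis emeasure_empty zero_le)
  qed
  have tails: "(\<integral>\<^sup>+z. ennreal (if 1/2 \<le> f z then 1 - f z else 0) \<partial>M)
      \<le> (\<integral>\<^sup>+z. ennreal (if f z < 1/2 then f z else 0) \<partial>M)"
  proof -
    have "(\<integral>\<^sup>+z. ennreal (if 1/2 \<le> f z then 1 - f z else 0) \<partial>M)
        = (\<integral>\<^sup>+t. emeasure M {z \<in> space M. 1/2 \<le> f z \<and> 0 \<le> t \<and> t \<le> 1 - f z} \<partial>lborel)"
      by (rule nn_integral_lborel_emeasure_section[symmetric]) (unfold_locales, measurable)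
    also have "\<dots> \<le> (\<integral>\<^sup>+t. emeasure M {z \<in> space M. f z < 1/2 \<and> 0 \<le> t \<and> t \<le> f z} \<partial>lborel)"
      by (intro nn_integral_mono sections)
    also have "\<dots> = (\<integral>\<^sup>+z. ennreal (if f z < 1/2 then f z else 0) \<partial>M)"
      by (rule nn_integral_lborel_emeasure_section) (unfold_locales, measurable)
    finally show ?thesis .
  qed
  have "ennreal (measure M {z \<in> space M. 1/2 \<le> f z})
      = (\<integral>\<^sup>+z. indicator {z \<in> space M. 1/2 \<le> f z} z \<partial>M)"
    by (simp add: emeasure_eq_measure[symmetric])
  also have "\<dots> = (\<integral>\<^sup>+z. ennreal (if 1/2 \<le> f z then 1 - f z else 0)
                         + ennreal (if 1/2 \<le> f z then f z else 0) \<partial>M)"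
    using f_range
    by (intro nn_integral_cong) (simp add: ennreal_plus[symmetric] del: ennreal_plus split: split_indicator)
  also have "\<dots> \<le> (\<integral>\<^sup>+z. ennreal (if f z < 1/2 then f z else 0)
                         + ennreal (if 1/2 \<le> f z then f z else 0) \<partial>M)"
    using tails by (simp add: nn_integral_add)
  also have "\<dots> = ennreal (\<integral>z. f z \<partial>M)"
    using f_range
    by (subst nn_integral_eq_integral[symmetric])
       (auto intro!: nn_integral_cong integrable_const_bound[where B=1] AE_I2)
  finally show ?thesis
    using f_range by (simp add: ennreal_le_iff integral_nonneg_AE)
qed

lemma vote_eq_measure: "vote \<rho> x j = measure \<rho> {h \<in> space \<rho>. h x = j}"
  by (simp add: vote_def Collect_conj_eq Int_commute)

lemma W_eq_measure: "W \<rho> z = measure \<rho> {h \<in> space \<rho>. h (fst z) \<noteq> snd z}"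
  by (simp add: W_def Collect_conj_eq Int_commute)

context
  fixes \<rho> :: "('x \<Rightarrow> nat) measure" and x :: 'x
  assumes rho_prob: "prob_space \<rho>"
    and eval_meas[measurable]: "(\<lambda>h. h x) \<in> measurable \<rho> (count_space UNIV)"
begin

interpretation prob_space \<rho> by (fact rho_prob)

lemma W_eq_1_minus_vote: "W \<rho> (x, y) = 1 - vote \<rho> x y"
proof -
  have "{h \<in> space \<rho>. h x \<noteq> y} = space \<rho> - {h \<in> space \<rho>. h x = y}"
    by auto
  then show ?thesis
    by (simp add: W_eq_measure vote_eq_measure prob_compl)
qed

lemma vote_add_vote_le_1:
  assumes "y \<noteq> m"
  shows "vote \<rho> x y + vote \<rho> x m \<le> 1"
proof -
  have "vote \<rho> x y + vote \<rho> x m = prob ({h \<in> space \<rho>. h x = y} \<union> {h \<in> space \<rho>. h x = m})"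
    using assms by (simp add: vote_eq_measure finite_measure_Union[symmetric] disjoint_iff)
  also have "\<dots> \<le> 1"
    by (rule prob_le_1)
  finally show ?thesis .
qed

lemma W_ge_half_if_outvoted:
  assumes "y \<noteq> m" and "vote \<rho> x y \<le> vote \<rho> x m"
  shows "1/2 \<le> W \<rho> (x, y)"
  using vote_add_vote_le_1[OF assms(1)] assms(2) by (simp add: W_eq_1_minus_vote)

end

lemma pred_misclassified:
  fixes X :: "'x measure" and D :: "('x \<times> nat) measure" and \<rho> :: "('x \<Rightarrow> nat) measure"
  assumes D_sets: "sets D = sets (X \<Otimes>\<^sub>M count_space UNIV)"
    and eval_meas: "(\<lambda>(h, x). h x) \<in> measurable (\<rho> \<Otimes>\<^sub>M X) (count_space UNIV)"
  shows "Measurable.pred (D \<Otimes>\<^sub>M \<rho>) (\<lambda>(z, h). h (fst z) \<noteq> snd z)"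
proof -
  have [measurable]: "fst \<in> measurable D X" "snd \<in> measurable D (count_space UNIV)"
    using measurable_fst measurable_snd by (simp_all add: measurable_cong_sets[OF D_sets refl])
  have "(\<lambda>(z, h). (h, fst z)) \<in> measurable (D \<Otimes>\<^sub>M \<rho>) (\<rho> \<Otimes>\<^sub>M X)"
    by measurable
  from measurable_comp[OF this eval_meas]
  have prediction: "(\<lambda>p. snd p (fst (fst p))) \<in> measurable (D \<Otimes>\<^sub>M \<rho>) (count_space UNIV)"
    by (simp add: comp_def case_prod_beta)
  have label: "(\<lambda>p. snd (fst p)) \<in> measurable (D \<Otimes>\<^sub>M \<rho>) (count_space UNIV)"
    by measurable
  show ?thesis
    unfolding case_prod_unfold by (rule pred_neq_count_space[OF prediction label])
qed

lemma
  fixes D :: "('x \<times> nat) measure" and \<rho> :: "('x \<Rightarrow> nat) measure"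
  assumes "prob_space D" "prob_space \<rho>"
    and [measurable]: "Measurable.pred (D \<Otimes>\<^sub>M \<rho>) (\<lambda>(z, h). h (fst z) \<noteq> snd z)"
  shows borel_measurable_W: "W \<rho> \<in> borel_measurable D"
    and avg_err_eq_integral_W: "avg_err \<rho> D = (\<integral>z. W \<rho> z \<partial>D)"
proof -
  interpret pair_prob_space D \<rho>
    using assms(1,2) by (simp add: pair_prob_space_def pair_sigma_finite_def prob_space_imp_sigma_finite)
  define miss :: "'x \<times> nat \<Rightarrow> ('x \<Rightarrow> nat) \<Rightarrow> real" where
    "miss z h = of_bool (h (fst z) \<noteq> snd z)" for z h
  have [measurable]: "case_prod miss \<in> borel_measurable (D \<Otimes>\<^sub>M \<rho>)"
    unfolding miss_def by measurable
  have W_eq: "W \<rho> z = (\<integral>h. miss z h \<partial>\<rho>)" for z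
    by (simp add: W_def miss_def indicator_def)
  show "W \<rho> \<in> borel_measurable D"
    unfolding W_eq by measurable
  have "err D h = (\<integral>z. miss z h \<partial>D)" for h
  proof -
    have "(\<integral>z. miss z h \<partial>D) = (\<integral>z. indicator {z. h (fst z) \<noteq> snd z} z \<partial>D)"
      by (simp add: miss_def indicator_def)
    then show ?thesis
      by (simp add: err_def Collect_conj_eq Int_commute)
  qed
  then have "avg_err \<rho> D = (\<integral>h. \<integral>z. miss z h \<partial>D \<partial>\<rho>)"
    by (simp add: avg_err_def)
  also have "\<dots> = (\<integral>z. \<integral>h. miss z h \<partial>\<rho> \<partial>D)"
    by (intro Fubini_integral P.integrable_const_bound[where B=1]) (auto simp: miss_def)
  finally show "avg_err \<rho> D = (\<integral>z. W \<rho> z \<partial>D)"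
    by (simp add: W_eq)
qed

theorem theorem1:
  fixes K :: nat
    and X :: "'x measure"
    and D :: "('x \<times> nat) measure"
    and \<rho> :: "('x \<Rightarrow> nat) measure"
    and hMV :: "'x \<Rightarrow> nat"
  assumes K: "K \<ge> 2"
    and D_prob: "prob_space D"
    and D_sets: "sets D = sets (X \<Otimes>\<^sub>M count_space UNIV)"
    and D_labels: "AE z in D. snd z \<in> {1..K}"
    and rho_prob: "prob_space \<rho>"
    and rho_range: "\<forall>h\<in>space \<rho>. \<forall>x\<in>space X. h x \<in> {1..K}"
    and eval_meas: "(\<lambda>(h, x). h x) \<in> measurable (\<rho> \<Otimes>\<^sub>M X) (count_space UNIV)"
    and MV: "is_majority_vote K X \<rho> hMV"
    and MV_meas: "hMV \<in> measurable X (count_space UNIV)"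
    and comp: "competent \<rho> D"
    and nonzero: "avg_err \<rho> D \<noteq> 0"
  shows "EIR \<rho> D hMV \<ge> 0 \<and> err D hMV \<le> avg_err \<rho> D"
proof -
  interpret D: prob_space D by fact
  note miss_meas = pred_misclassified[OF D_sets eval_meas]
  note W_meas[measurable] = borel_measurable_W[OF D_prob rho_prob miss_meas]
  have W_range: "0 \<le> W \<rho> z \<and> W \<rho> z \<le> 1" for z
    using prob_space.prob_le_1[OF rho_prob] by (simp add: W_eq_measure)
  have "AE z in D. hMV (fst z) \<noteq> snd z \<longrightarrow> 1/2 \<le> W \<rho> z"
    using D_labels
  proof (rule AE_mp, intro AE_I2 impI)
    fix z assume z: "z \<in> space D" and label: "snd z \<in> {1..K}" and wrong: "hMV (fst z) \<noteq> snd z"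
    have x: "fst z \<in> space X"
      using z by (simp add: sets_eq_imp_space_eq[OF D_sets] space_pair_measure mem_Times_iff)
    then have "(\<lambda>h. h (fst z)) \<in> measurable \<rho> (count_space UNIV)"
      using measurable_comp[OF measurable_Pair2' eval_meas] by (simp add: comp_def)
    moreover have "vote \<rho> (fst z) (snd z) \<le> vote \<rho> (fst z) (hMV (fst z))"
      using MV x label by (simp add: is_majority_vote_def)
    ultimately have "1/2 \<le> W \<rho> (fst z, snd z)"
      by (rule W_ge_half_if_outvoted[OF rho_prob _ wrong[symmetric]])
    then show "1/2 \<le> W \<rho> z"
      by simp
  qed
  then have "err D hMV \<le> measure D {z \<in> space D. 1/2 \<le> W \<rho> z}"
    unfolding err_def by (intro D.finite_measure_mono_AE) auto
  also have "\<dots> \<le> (\<integral>z. W \<rho> z \<partial>D)"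
    using comp W_range by (intro measure_ge_half_le_integral[OF D_prob W_meas]) (auto simp: competent_def)
  also have "\<dots> = avg_err \<rho> D"
    by (rule avg_err_eq_integral_W[OF D_prob rho_prob miss_meas, symmetric])
  finally have "err D hMV \<le> avg_err \<rho> D" .
  moreover have "0 < avg_err \<rho> D"
    using nonzero W_range by (simp add: avg_err_eq_integral_W[OF D_prob rho_prob miss_meas]
        integral_nonneg_AE order_less_le)
  ultimately show ?thesis
    by (simp add: EIR_def)
qed

end
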